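(* For every two integers $a,b$ with $2\le a\le b$, there exists a finite, simple, connected graph $G$ of order $b$ with $\dim_{wt}(G)=a$.
   Context: $d(x,y)$ is the shortest-path distance. A set $W\subseteq V(G)$ is a resolving set if for every two distinct vertices $y,z$ there is $x\in W$ with $d(y,x)\ne d(z,x)$. A set $W$ is a weak total resolving set (WTR-set) if $W$ is resolving and, for every $w\in W$ and every $x\in V(G)\setminus W$, there is $w'\in W\setminus\{w\}$ with $d(x,w')\ne d(w,w')$. $\dim_{wt}(G)$ is the minimum cardinality of a WTR-set. *)

theory Defs
  imports Main
begin

definition simple_graph :: "'a set \<Rightarrow> ('a \<Rightarrow> 'a \<Rightarrow> bool) \<Rightarrow> bool" where
  "simple_graph V E \<longleftrightarrow> finite V \<and>
     (\<forall>x y. E x y \<longrightarrow> x \<in> V \<and> y \<in> V) \<and>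
     (\<forall>x y. E x y \<longrightarrow> E y x) \<and> (\<forall>x. \<not> E x x)"

definition walk :: "'a set \<Rightarrow> ('a \<Rightarrow> 'a \<Rightarrow> bool) \<Rightarrow> 'a list \<Rightarrow> bool" where
  "walk V E xs \<longleftrightarrow> xs \<noteq> [] \<and> set xs \<subseteq> V \<and>
     (\<forall>i. Suc i < length xs \<longrightarrow> E (xs ! i) (xs ! Suc i))"

definition connected_graph :: "'a set \<Rightarrow> ('a \<Rightarrow> 'a \<Rightarrow> bool) \<Rightarrow> bool" where
  "connected_graph V E \<longleftrightarrow> V \<noteq> {} \<and>
     (\<forall>x\<in>V. \<forall>y\<in>V. \<exists>xs. walk V E xs \<and> hd xs = x \<and> last xs = y)"

definition gdist :: "'a set \<Rightarrow> ('a \<Rightarrow> 'a \<Rightarrow> bool) \<Rightarrow> 'a \<Rightarrow> 'a \<Rightarrow> nat" where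
  "gdist V E x y = (LEAST n. \<exists>xs. walk V E xs \<and> hd xs = x \<and> last xs = y \<and> length xs = Suc n)"

definition resolving_set :: "'a set \<Rightarrow> ('a \<Rightarrow> 'a \<Rightarrow> bool) \<Rightarrow> 'a set \<Rightarrow> bool" where
  "resolving_set V E W \<longleftrightarrow> W \<subseteq> V \<and>
     (\<forall>y\<in>V. \<forall>z\<in>V. y \<noteq> z \<longrightarrow> (\<exists>x\<in>W. gdist V E y x \<noteq> gdist V E z x))"

definition wtr_set :: "'a set \<Rightarrow> ('a \<Rightarrow> 'a \<Rightarrow> bool) \<Rightarrow> 'a set \<Rightarrow> bool" where
  "wtr_set V E W \<longleftrightarrow> resolving_set V E W \<and>
     (\<forall>w\<in>W. \<forall>x\<in>V - W. \<exists>w'\<in>W - {w}. gdist V E x w' \<noteq> gdist V E w w')"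

definition dim_wt :: "'a set \<Rightarrow> ('a \<Rightarrow> 'a \<Rightarrow> bool) \<Rightarrow> nat" where
  "dim_wt V E = (LEAST k. \<exists>W. wtr_set V E W \<and> card W = k)"

end

theory Submission imports Defs begin

text \<open>For a = b the complete graph K_b works: any two vertices are twins (they have the same
distance to every third vertex), and a weak total resolving set must contain every vertex that
has a twin. For a < b take a broom: a path 0 - 1 - ... - L with t = a - 1 \<ge> 1 leaves attached
to L, so b = L + t + 1. The leaves are pairwise twins, so for t \<ge> 2 they all lie in every
WTR-set, and the leaves alone do not suffice, because the vertex L - 1 has the same distance
to every leaf as a leaf has to every other leaf; hence a WTR-set has at least t + 1 elements,
and the leaves together with the end 0 of the path form one. For t = 1 the broom is a path,
and every WTR-set of a graph with two vertices has at least two elements.\<close>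

lemma walk_singleton: "x \<in> V \<Longrightarrow> walk V E [x]"
  by (simp add: walk_def)

lemma walk_Cons_Cons: "walk V E (x # y # ys) \<longleftrightarrow> x \<in> V \<and> E x y \<and> walk V E (y # ys)"
proof
  assume xy: "walk V E (x # y # ys)"
  have "E x y"
    using xy unfolding walk_def by (metis length_Cons nth_Cons_0 nth_Cons_Suc zero_less_Suc Suc_less_eq)
  moreover have "walk V E (y # ys)"
    using xy unfolding walk_def by (metis Suc_less_eq length_Cons list.discI nth_Cons_Suc set_subset_Cons subset_trans)
  ultimately show "x \<in> V \<and> E x y \<and> walk V E (y # ys)"
    using xy by (simp add: walk_def)
next
  assume "x \<in> V \<and> E x y \<and> walk V E (y # ys)"
  then show "walk V E (x # y # ys)"
    unfolding walk_def by (auto simp: less_Suc_eq_0_disj)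
qed

subsection \<open>Distance functions\<close>

definition is_distance_function :: "'a set \<Rightarrow> ('a \<Rightarrow> 'a \<Rightarrow> bool) \<Rightarrow> ('a \<Rightarrow> 'a \<Rightarrow> nat) \<Rightarrow> bool" where
  "is_distance_function V E f \<longleftrightarrow>
     (\<forall>y\<in>V. f y y = 0) \<and>
     (\<forall>x x' y. E x x' \<longrightarrow> y \<in> V \<longrightarrow> f x y \<le> f x' y + 1) \<and>
     (\<forall>x\<in>V. \<forall>y\<in>V. x \<noteq> y \<longrightarrow> (\<exists>x'. E x x' \<and> f x' y + 1 = f x y))"

lemma
  assumes "is_distance_function V E f"
  shows distance_function_refl: "y \<in> V \<Longrightarrow> f y y = 0"
    and distance_function_edge: "E x x' \<Longrightarrow> y \<in> V \<Longrightarrow> f x y \<le> f x' y + 1"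
    and distance_function_descent:
      "x \<in> V \<Longrightarrow> y \<in> V \<Longrightarrow> x \<noteq> y \<Longrightarrow> \<exists>x'. E x x' \<and> f x' y + 1 = f x y"
  using assms unfolding is_distance_function_def by blast+

lemma walk_of_distance_function:
  assumes G: "simple_graph V E" and f: "is_distance_function V E f"
    and "x \<in> V" and y: "y \<in> V"
  shows "\<exists>xs. walk V E xs \<and> hd xs = x \<and> last xs = y \<and> length xs = Suc (f x y)"
  using \<open>x \<in> V\<close>
proof (induction "f x y" arbitrary: x)
  case 0
  then have "x = y"
    using distance_function_descent[OF f _ y] by fastforce
  then show ?case
    using 0 by (intro exI[of _ "[x]"]) (simp add: walk_singleton)
next
  case (Suc n)
  then have "x \<noteq> y"
    using distance_function_refl[OF f y] by fastforce
  then obtain x' where x': "E x x'" "f x' y + 1 = f x y"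
    using distance_function_descent[OF f Suc.prems y] by blast
  have "x' \<in> V"
    using G x'(1) unfolding simple_graph_def by blast
  moreover have "f x' y = n"
    using Suc.hyps(2) x'(2) by simp
  ultimately obtain xs where xs: "walk V E xs" "hd xs = x'" "last xs = y" "length xs = Suc n"
    using Suc.hyps(1) by metis
  then have "xs = x' # tl xs"
    by (cases xs) auto
  then have "walk V E (x # xs)"
    using xs(1) x'(1) Suc.prems walk_Cons_Cons[of V E x x' "tl xs"] by simp
  then show ?case
    using xs Suc.hyps(2) \<open>xs = x' # tl xs\<close> by (intro exI[of _ "x # xs"]) auto
qed

lemma distance_function_le_walk_length:
  assumes f: "is_distance_function V E f" and "y \<in> V"
  shows "walk V E xs \<Longrightarrow> last xs = y \<Longrightarrow> f (hd xs) y \<le> length xs - 1"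
proof (induction xs)
  case Nil
  then show ?case by (simp add: walk_def)
next
  case (Cons z zs)
  show ?case
  proof (cases zs)
    case Nil
    then show ?thesis
      using Cons.prems distance_function_refl[OF f \<open>y \<in> V\<close>] by simp
  next
    case (Cons u us)
    have "E z u" and "walk V E zs" and "last zs = y"
      using Cons.prems walk_Cons_Cons[of V E z u us] \<open>zs = u # us\<close> by auto
    then have "f u y \<le> length zs - 1"
      using Cons.IH \<open>zs = u # us\<close> by simp
    moreover have "f z y \<le> f u y + 1"
      using distance_function_edge[OF f \<open>E z u\<close> \<open>y \<in> V\<close>] .
    ultimately show ?thesis
      using \<open>zs = u # us\<close> by simp
  qed
qed

lemma gdist_eq_distance_function:
  assumes "simple_graph V E" and f: "is_distance_function V E f" and "x \<in> V" and "y \<in> V"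
  shows "gdist V E x y = f x y"
  unfolding gdist_def
proof (rule Least_equality)
  show "\<exists>xs. walk V E xs \<and> hd xs = x \<and> last xs = y \<and> length xs = Suc (f x y)"
    using walk_of_distance_function[OF assms] .
next
  fix n
  assume "\<exists>xs. walk V E xs \<and> hd xs = x \<and> last xs = y \<and> length xs = Suc n"
  then obtain xs where "walk V E xs" "hd xs = x" "last xs = y" "length xs = Suc n"
    by blast
  then show "f x y \<le> n"
    using distance_function_le_walk_length[OF f \<open>y \<in> V\<close>] by fastforce
qed

lemma connected_graph_if_distance_function:
  assumes "simple_graph V E" and "is_distance_function V E f" and "V \<noteq> {}"
  shows "connected_graph V E"
  unfolding connected_graph_def
proof (intro conjI ballI)
  fix x y
  assume "x \<in> V" "y \<in> V"
  then show "\<exists>xs. walk V E xs \<and> hd xs = x \<and> last xs = y"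
    using walk_of_distance_function[OF assms(1,2)] by meson
qed (use assms in simp)

subsection \<open>Weak total resolving sets\<close>

lemma dim_wt_eqI:
  assumes "wtr_set V E W" and "card W = k" and "\<And>W'. wtr_set V E W' \<Longrightarrow> k \<le> card W'"
  shows "dim_wt V E = k"
  unfolding dim_wt_def by (rule Least_equality) (use assms in auto)

lemma two_le_card_wtr_set:
  assumes "finite V" and "2 \<le> card V" and W: "wtr_set V E W"
  shows "2 \<le> card W"
proof (rule ccontr)
  assume "\<not> 2 \<le> card W"
  have "finite W"
    using W \<open>finite V\<close> finite_subset unfolding wtr_set_def resolving_set_def by blast
  obtain y z where "y \<in> V" "z \<in> V" "y \<noteq> z"
    using \<open>2 \<le> card V\<close> \<open>finite V\<close> by (metis card_le_Suc0_iff_eq not_less_eq_eq numeral_2_eq_2)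
  then obtain w where "w \<in> W"
    using W unfolding wtr_set_def resolving_set_def by blast
  moreover have "card W \<le> Suc 0"
    using \<open>\<not> 2 \<le> card W\<close> by simp
  ultimately have "W = {w}"
    using \<open>finite W\<close> by (auto simp: card_le_Suc0_iff_eq)
  obtain x where "x \<in> V" "x \<noteq> w"
    using \<open>y \<in> V\<close> \<open>z \<in> V\<close> \<open>y \<noteq> z\<close> by blast
  then show False
    using W \<open>W = {w}\<close> unfolding wtr_set_def by auto
qed

lemma twin_mem_wtr_set:
  assumes W: "wtr_set V E W" and "y \<in> V" and "y' \<in> V" and "y \<noteq> y'"
    and twins: "\<And>w. w \<in> V \<Longrightarrow> w \<noteq> y \<Longrightarrow> w \<noteq> y' \<Longrightarrow> gdist V E y w = gdist V E y' w"
  shows "y \<in> W"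
proof (rule ccontr)
  assume "y \<notin> W"
  have "W \<subseteq> V"
    using W unfolding wtr_set_def resolving_set_def by blast
  show False
  proof (cases "y' \<in> W")
    case True
    then obtain w' where "w' \<in> W - {y'}" "gdist V E y w' \<noteq> gdist V E y' w'"
      using W \<open>y \<in> V\<close> \<open>y \<notin> W\<close> unfolding wtr_set_def by blast
    then show False
      using twins \<open>W \<subseteq> V\<close> \<open>y \<notin> W\<close> by blast
  next
    case False
    then obtain w where "w \<in> W" "gdist V E y w \<noteq> gdist V E y' w"
      using W assms(2-4) unfolding wtr_set_def resolving_set_def by blast
    then show False
      using twins \<open>W \<subseteq> V\<close> \<open>y \<notin> W\<close> False by blast
  qed
qed

subsection \<open>Complete graphs\<close>

definition complete_edge :: "nat \<Rightarrow> nat \<Rightarrow> nat \<Rightarrow> bool" where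
  "complete_edge n x y \<longleftrightarrow> x \<noteq> y \<and> x < n \<and> y < n"

lemma simple_graph_complete: "simple_graph {..<n} (complete_edge n)"
  by (auto simp: simple_graph_def complete_edge_def)

lemma distance_function_complete:
  "is_distance_function {..<n} (complete_edge n) (\<lambda>x y. if x = y then 0 else 1)"
  by (auto simp: is_distance_function_def complete_edge_def)

lemma gdist_complete:
  "x < n \<Longrightarrow> y < n \<Longrightarrow> gdist {..<n} (complete_edge n) x y = (if x = y then 0 else 1)"
  using gdist_eq_distance_function[OF simple_graph_complete distance_function_complete] by simp

lemma connected_graph_complete: "0 < n \<Longrightarrow> connected_graph {..<n} (complete_edge n)"
  by (rule connected_graph_if_distance_function[OF simple_graph_complete distance_function_complete]) auto

lemma dim_wt_complete:
  assumes "2 \<le> n"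
  shows "dim_wt {..<n} (complete_edge n) = n"
proof (rule dim_wt_eqI)
  show "wtr_set {..<n} (complete_edge n) {..<n}"
    unfolding wtr_set_def resolving_set_def
  proof (intro conjI ballI impI)
    fix y z
    assume "y \<in> {..<n}" "z \<in> {..<n}" "y \<noteq> z"
    then show "\<exists>x\<in>{..<n}. gdist {..<n} (complete_edge n) y x \<noteq> gdist {..<n} (complete_edge n) z x"
      by (intro bexI[of _ y]) (simp_all add: gdist_complete)
  qed auto
  show "card {..<n} = n"
    by simp
next
  fix W
  assume W: "wtr_set {..<n} (complete_edge n) W"
  have "y \<in> W" if "y < n" for y
  proof -
    define y' :: nat where "y' = (if y = 0 then 1 else 0)"
    have "y' < n" "y' \<noteq> y"
      using \<open>2 \<le> n\<close> \<open>y < n\<close> by (auto simp: y'_def)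
    show ?thesis
    proof (rule twin_mem_wtr_set[OF W, of y y'])
      fix w
      assume "w \<in> {..<n}" "w \<noteq> y" "w \<noteq> y'"
      then show "gdist {..<n} (complete_edge n) y w = gdist {..<n} (complete_edge n) y' w"
        using \<open>y < n\<close> \<open>y' < n\<close> by (simp add: gdist_complete)
    qed (use \<open>y < n\<close> \<open>y' < n\<close> \<open>y' \<noteq> y\<close> in auto)
  qed
  then have "{..<n} \<subseteq> W"
    by blast
  moreover have "finite W"
    using W finite_subset unfolding wtr_set_def resolving_set_def by blast
  ultimately show "n \<le> card W"
    using card_mono by (metis card_lessThan)
qed

subsection \<open>Brooms\<close>

definition broom_edge :: "nat \<Rightarrow> nat \<Rightarrow> nat \<Rightarrow> nat \<Rightarrow> bool" where
  "broom_edge L t x y \<longleftrightarrow> (x \<le> L \<and> y \<le> L \<and> (y = Suc x \<or> x = Suc y)) \<or>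
     (x = L \<and> L < y \<and> y \<le> L + t) \<or> (y = L \<and> L < x \<and> x \<le> L + t)"

text \<open>Each leaf sits at position L + 1 of a path, except that two distinct leaves are at
distance 2; the sum of the two truncated differences is the absolute difference.\<close>

definition broom_dist :: "nat \<Rightarrow> nat \<Rightarrow> nat \<Rightarrow> nat" where
  "broom_dist L x y = (if x = y then 0 else if L < x \<and> L < y then 2 else
     (min x (Suc L) - min y (Suc L)) + (min y (Suc L) - min x (Suc L)))"

lemma simple_graph_broom: "simple_graph {..L + t} (broom_edge L t)"
  unfolding simple_graph_def broom_edge_def by auto

lemma broom_dist_edge: "broom_edge L t x x' \<Longrightarrow> broom_dist L x y \<le> broom_dist L x' y + 1"
  by (auto simp: broom_edge_def broom_dist_def)

lemma broom_dist_descent: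
  assumes "x \<le> L + t" and "y \<le> L + t" and "x \<noteq> y"
  shows "\<exists>x'. broom_edge L t x x' \<and> broom_dist L x' y + 1 = broom_dist L x y"
proof (cases "L < x")
  case True
  then show ?thesis
    using assms by (intro exI[of _ L]) (auto simp: broom_edge_def broom_dist_def)
next
  case x_path: False
  show ?thesis
  proof (cases "min y (Suc L) < x")
    case True
    then show ?thesis
      using assms x_path by (intro exI[of _ "x - 1"]) (auto simp: broom_edge_def broom_dist_def)
  next
    case False
    then consider "x = L" "L < y" | "x < L"
      using assms x_path by linarith
    then show ?thesis
    proof cases
      case 1
      then show ?thesis
        using assms by (intro exI[of _ y]) (auto simp: broom_edge_def broom_dist_def)
    next
      case 2
      then show ?thesis
        using assms False by (intro exI[of _ "Suc x"]) (auto simp: broom_edge_def broom_dist_def)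
    qed
  qed
qed

lemma distance_function_broom: "is_distance_function {..L + t} (broom_edge L t) (broom_dist L)"
  unfolding is_distance_function_def
  using broom_dist_edge broom_dist_descent by (simp add: broom_dist_def)

lemma gdist_broom:
  "x \<le> L + t \<Longrightarrow> y \<le> L + t \<Longrightarrow> gdist {..L + t} (broom_edge L t) x y = broom_dist L x y"
  using gdist_eq_distance_function[OF simple_graph_broom distance_function_broom] by simp

lemma connected_graph_broom: "connected_graph {..L + t} (broom_edge L t)"
  by (rule connected_graph_if_distance_function[OF simple_graph_broom distance_function_broom]) auto

lemma broom_dist_zero_right: "broom_dist L y 0 = min y (Suc L)"
  by (cases "y = 0") (auto simp: broom_dist_def)

lemma broom_dist_path_leaf: "x \<le> L \<Longrightarrow> L < w \<Longrightarrow> broom_dist L x w = Suc L - x"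
  by (auto simp: broom_dist_def)

lemma wtr_set_broom:
  assumes "1 \<le> L" and "1 \<le> t"
  shows "wtr_set {..L + t} (broom_edge L t) (insert 0 {L<..L + t})"
  unfolding wtr_set_def resolving_set_def
proof (intro conjI ballI impI)
  fix y z
  assume "y \<in> {..L + t}" "z \<in> {..L + t}" "y \<noteq> z"
  show "\<exists>x\<in>insert 0 {L<..L + t}.
      gdist {..L + t} (broom_edge L t) y x \<noteq> gdist {..L + t} (broom_edge L t) z x"
  proof (cases "L < y \<and> L < z")
    case True
    then show ?thesis
      using \<open>y \<in> {..L + t}\<close> \<open>z \<in> {..L + t}\<close> \<open>y \<noteq> z\<close>
      by (intro bexI[of _ y]) (auto simp: gdist_broom broom_dist_def)
  next
    case False
    then show ?thesis
      using \<open>y \<in> {..L + t}\<close> \<open>z \<in> {..L + t}\<close> \<open>y \<noteq> z\<close>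
      by (intro bexI[of _ 0]) (auto simp: gdist_broom broom_dist_zero_right min_def)
  qed
next
  fix w x
  assume "w \<in> insert 0 {L<..L + t}" and "x \<in> {..L + t} - insert 0 {L<..L + t}"
  show "\<exists>w'\<in>insert 0 {L<..L + t} - {w}.
      gdist {..L + t} (broom_edge L t) x w' \<noteq> gdist {..L + t} (broom_edge L t) w w'"
  proof (cases "w = 0")
    case True
    then show ?thesis
      using \<open>x \<in> {..L + t} - insert 0 {L<..L + t}\<close> assms
      by (intro bexI[of _ "Suc L"]) (auto simp: gdist_broom broom_dist_path_leaf)
  next
    case False
    then show ?thesis
      using \<open>w \<in> insert 0 {L<..L + t}\<close> \<open>x \<in> {..L + t} - insert 0 {L<..L + t}\<close>
      by (intro bexI[of _ 0]) (auto simp: gdist_broom broom_dist_zero_right)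
  qed
qed auto

lemma broom_dist_leaf_twins:
  assumes "L < y" and "L < y'" and "w \<noteq> y" and "w \<noteq> y'"
  shows "broom_dist L y w = broom_dist L y' w"
  using assms by (cases "L < w") (auto simp: broom_dist_def min_def)

lemma Suc_le_card_wtr_set_broom:
  assumes "1 \<le> L" and "2 \<le> t" and W: "wtr_set {..L + t} (broom_edge L t) W"
  shows "Suc t \<le> card W"
proof -
  have "W \<subseteq> {..L + t}"
    using W unfolding wtr_set_def resolving_set_def by blast
  then have "finite W"
    using finite_subset by blast
  have leaves: "{L<..L + t} \<subseteq> W"
  proof
    fix y
    assume y: "y \<in> {L<..L + t}"
    define y' where "y' = (if y = Suc L then Suc (Suc L) else Suc L)"
    have "y' \<in> {L<..L + t}" "y' \<noteq> y"
      using \<open>2 \<le> t\<close> y by (auto simp: y'_def)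
    show "y \<in> W"
    proof (rule twin_mem_wtr_set[OF W, of y y'])
      fix w
      assume "w \<in> {..L + t}" "w \<noteq> y" "w \<noteq> y'"
      then show "gdist {..L + t} (broom_edge L t) y w = gdist {..L + t} (broom_edge L t) y' w"
        using y \<open>y' \<in> {L<..L + t}\<close> by (simp add: gdist_broom broom_dist_leaf_twins)
    qed (use y \<open>y' \<in> {L<..L + t}\<close> \<open>y' \<noteq> y\<close> in auto)
  qed
  have "W \<noteq> {L<..L + t}"
  proof
    assume "W = {L<..L + t}"
    then have "Suc L \<in> W" and "L - 1 \<in> {..L + t} - W"
      using \<open>2 \<le> t\<close> by auto
    then obtain w' where "w' \<in> W - {Suc L}"
        "gdist {..L + t} (broom_edge L t) (L - 1) w' \<noteq> gdist {..L + t} (broom_edge L t) (Suc L) w'"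
      using W unfolding wtr_set_def by blast
    moreover have "L < w'" and "w' \<le> L + t" and "w' \<noteq> Suc L"
      using \<open>W = {L<..L + t}\<close> \<open>w' \<in> W - {Suc L}\<close> by auto
    moreover have "broom_dist L (L - 1) w' = 2"
      using broom_dist_path_leaf[of "L - 1" L w'] \<open>1 \<le> L\<close> \<open>L < w'\<close> by simp
    ultimately show False
      by (simp add: gdist_broom broom_dist_def)
  qed
  with leaves have "card {L<..L + t} < card W"
    using \<open>finite W\<close> psubset_card_mono by blast
  then show ?thesis
    by simp
qed

lemma dim_wt_broom:
  assumes "1 \<le> L" and "1 \<le> t"
  shows "dim_wt {..L + t} (broom_edge L t) = Suc t"
proof (rule dim_wt_eqI[OF wtr_set_broom[OF assms]])
  show "card (insert 0 {L<..L + t}) = Suc t"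
    by simp
next
  fix W
  assume W: "wtr_set {..L + t} (broom_edge L t) W"
  show "Suc t \<le> card W"
  proof (cases "t = 1")
    case True
    then show ?thesis
      using two_le_card_wtr_set[OF _ _ W] assms by simp
  next
    case False
    then show ?thesis
      using Suc_le_card_wtr_set_broom[OF \<open>1 \<le> L\<close> _ W] assms by simp
  qed
qed

theorem theorem13:
  fixes a b :: nat
  assumes "2 \<le> a" and "a \<le> b"
  shows "\<exists>(V :: nat set) E. simple_graph V E \<and> connected_graph V E \<and>
           card V = b \<and> dim_wt V E = a"
proof (cases "a = b")
  case True
  then show ?thesis
    using assms simple_graph_complete connected_graph_complete dim_wt_complete
    by (intro exI[of _ "{..<b}"] exI[of _ "complete_edge b"]) auto
next
  case False
  define L t where "L = b - a" and "t = a - 1"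
  have "1 \<le> L" "1 \<le> t" "b = Suc (L + t)" "a = Suc t"
    using assms False by (auto simp: L_def t_def)
  then show ?thesis
    using simple_graph_broom connected_graph_broom dim_wt_broom
    by (intro exI[of _ "{..L + t}"] exI[of _ "broom_edge L t"]) auto
qed

end
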